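(* Consider an insertion-only edge stream, an integer $M\ge 6$, and the reservoir sample $\mathcal{S}$ of capacity $M$ (as described in the context). For a time $t$ let $\tau^{(t)}$ be the number of triangles of $G^{(t)}$ all of whose edges lie in $\mathcal{S}$ at the end of time step $t$, and let $\phi^{(t)}=\frac{t(t-1)(t-2)}{M(M-1)(M-2)}\tau^{(t)}$ and $\phi_{\mathrm{mix}}^{(t)}=\left(\frac{t}{M}\right)^3\tau^{(t)}$. Then for any $t>M$, \[ \left|\phi^{(t)}-\phi_{\mathrm{mix}}^{(t)}\right|\le\phi_{\mathrm{mix}}^{(t)}\frac{4}{M-2}. \]
   Context: An insertion-only edge stream: at each time step $s=1,2,\dots$ an edge $e_s$ between two distinct vertices arrives, which is not already present; $G^{(t)}$ has edge set $\{e_1,\dots,e_t\}$. A triangle is a set of three edges $\{\{u,v\},\{v,w\},\{w,u\}\}$ with $u,v,w$ distinct. Reservoir sampling with capacity $M$: the sample starts empty; at time $s$, if $s\le M$ the edge $e_s$ is inserted; if $s>M$, with probability $M/s$ an edge chosen uniformly at random from the sample is removed and $e_s$ is inserted, otherwise the sample is unchanged. *)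

theory Defs
  imports "HOL-Probability.Probability_Mass_Function"
begin

text \<open>An edge is a 2-element vertex set; the stream is e 1, e 2, ... (e 0 unused).\<close>

definition graph_at :: "(nat \<Rightarrow> 'a set) \<Rightarrow> nat \<Rightarrow> 'a set set" where
  "graph_at e t = e ` {1..t}"

definition triangles :: "'a set set \<Rightarrow> 'a set set set" where
  "triangles E = {T. \<exists>u v w. distinct [u, v, w] \<and> T = {{u, v}, {v, w}, {w, u}} \<and> T \<subseteq> E}"

fun reservoir :: "(nat \<Rightarrow> 'a set) \<Rightarrow> nat \<Rightarrow> nat \<Rightarrow> 'a set set pmf" where
  "reservoir e M 0 = return_pmf {}"
| "reservoir e M (Suc s) =
     bind_pmf (reservoir e M s) (\<lambda>S.
       if Suc s \<le> M then return_pmf (insert (e (Suc s)) S)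
       else bind_pmf (bernoulli_pmf (real M / real (Suc s))) (\<lambda>b.
         if b then bind_pmf (pmf_of_set S) (\<lambda>x. return_pmf (insert (e (Suc s)) (S - {x})))
         else return_pmf S))"

definition tau :: "(nat \<Rightarrow> 'a set) \<Rightarrow> nat \<Rightarrow> 'a set set \<Rightarrow> nat" where
  "tau e t S = card {T \<in> triangles (graph_at e t). T \<subseteq> S}"

definition phi :: "nat \<Rightarrow> nat \<Rightarrow> nat \<Rightarrow> real" where
  "phi M t k = (real t * (real t - 1) * (real t - 2)) / (real M * (real M - 1) * (real M - 2)) * real k"

definition phi_mix :: "nat \<Rightarrow> nat \<Rightarrow> nat \<Rightarrow> real" where
  "phi_mix M t k = (real t / real M) ^ 3 * real k"

end

theory Submission
  imports Defs
begin

text \<open>The bound is pure arithmetic. With \<open>c = (t/M)\<^sup>3\<close> and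
  \<open>f = t(t-1)(t-2) / (M(M-1)(M-2))\<close> one has \<open>c \<le> f \<le> c (M+2)/(M-2) = c (1 + 4/(M-2))\<close>
  whenever \<open>2 < M \<le> t\<close>: after clearing denominators the lower bound is
  \<open>(t-M)(3tM - 2t - 2M) \<ge> 0\<close>, and the upper bound multiplies
  \<open>(t-1)(t-2) \<le> t\<^sup>2\<close> with \<open>M\<^sup>2 \<le> (M-1)(M+2)\<close>.\<close>

lemma abs_diff_scaled_le:
  fixes c f d k :: real
  assumes "c \<le> f" "f \<le> c * (1 + d)" "0 \<le> k"
  shows "\<bar>f * k - c * k\<bar> \<le> c * k * d"
proof -
  have "f - c \<le> c * d"
    using assms(2) by (simp add: algebra_simps)
  then have "(f - c) * k \<le> c * d * k"
    using assms(3) by (rule mult_right_mono)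
  moreover have "0 \<le> (f - c) * k"
    using assms(1,3) by simp
  ultimately show ?thesis
    by (simp add: algebra_simps)
qed

lemma falling_cube_ratio_ge_cube_ratio:
  fixes a m :: real
  assumes "2 < m" "m \<le> a"
  shows "(a / m) ^ 3 \<le> a * (a - 1) * (a - 2) / (m * (m - 1) * (m - 2))"
proof -
  have "2 * a \<le> a * m" "2 * m \<le> a * m"
    using assms mult_left_mono[of 2 m a] mult_right_mono[of 2 a m] by auto
  moreover have "0 \<le> a * m"
    using assms by simp
  ultimately have "2 * a + 2 * m \<le> 3 * (a * m)"
    by linarith
  moreover have "m\<^sup>2 * (a - 1) * (a - 2) - a\<^sup>2 * (m - 1) * (m - 2) = (a - m) * (3 * (a * m) - (2 * a + 2 * m))"
    by (simp add: algebra_simps power2_eq_square)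
  ultimately have "a\<^sup>2 * (m - 1) * (m - 2) \<le> m\<^sup>2 * (a - 1) * (a - 2)"
    using assms by (smt (verit) mult_nonneg_nonneg)
  then have "a * m * (a\<^sup>2 * (m - 1) * (m - 2)) \<le> a * m * (m\<^sup>2 * (a - 1) * (a - 2))"
    using assms by (intro mult_left_mono) auto
  then have "a ^ 3 * (m * (m - 1) * (m - 2)) \<le> m ^ 3 * (a * (a - 1) * (a - 2))"
    by (simp add: power2_eq_square power3_eq_cube algebra_simps)
  then show ?thesis
    using assms by (simp add: power_divide divide_simps mult.commute)
qed

lemma falling_cube_ratio_le_cube_ratio:
  fixes a m :: real
  assumes "2 < m" "m \<le> a"
  shows "a * (a - 1) * (a - 2) / (m * (m - 1) * (m - 2)) \<le> (a / m) ^ 3 * (1 + 4 / (m - 2))"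
proof -
  have "(a - 1) * (a - 2) * m\<^sup>2 \<le> a\<^sup>2 * ((m - 1) * (m + 2))"
  proof (rule mult_mono)
    show "(a - 1) * (a - 2) \<le> a\<^sup>2" "m\<^sup>2 \<le> (m - 1) * (m + 2)"
      using assms by (simp_all add: algebra_simps power2_eq_square)
  qed (use assms in auto)
  then have "a * m * (m - 2) * ((a - 1) * (a - 2) * m\<^sup>2) \<le> a * m * (m - 2) * (a\<^sup>2 * ((m - 1) * (m + 2)))"
    using assms by (intro mult_left_mono) auto
  then have "a * (a - 1) * (a - 2) * m ^ 3 * (m - 2) \<le> a ^ 3 * (m + 2) * (m * (m - 1) * (m - 2))"
    by (simp add: power2_eq_square power3_eq_cube algebra_simps)
  moreover have "1 + 4 / (m - 2) = (m + 2) / (m - 2)"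
    using assms by (simp add: field_simps)
  ultimately show ?thesis
    using assms by (simp add: power_divide divide_simps) (simp add: algebra_simps)
qed

theorem lemma4p10:
  fixes e :: "nat \<Rightarrow> 'a set" and M t :: nat and S :: "'a set set"
  assumes edges: "\<forall>s\<ge>1. card (e s) = 2"
    and new: "\<forall>r s. 1 \<le> r \<and> r < s \<longrightarrow> e r \<noteq> e s"
    and M: "M \<ge> 6"
    and t: "t > M"
    and S: "S \<in> set_pmf (reservoir e M t)"
  shows "\<bar>phi M t (tau e t S) - phi_mix M t (tau e t S)\<bar>
           \<le> phi_mix M t (tau e t S) * (4 / (real M - 2))"
proof -
  have M_t: "2 < real M" "real M \<le> real t"
    using M t by simp_all
  show ?thesis
    unfolding phi_def phi_mix_def
    using abs_diff_scaled_le[OF falling_cube_ratio_ge_cube_ratio[OF M_t]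
        falling_cube_ratio_le_cube_ratio[OF M_t] of_nat_0_le_iff]
    by (simp add: mult.assoc)
qed

end
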